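(* Let $h_6$ be the real two-photon Lie algebra. A Lie bialgebra structure $\delta$ on $h_6$ satisfies $\delta(B_+)=0$ if and only if there exist real numbers $a_2,a_3,a_4,a_5,c_2$ with $$a_2a_3-a_5c_2=0$$ such that $\delta(X)=[1\otimes X+X\otimes 1,\,r]$ for all $X\in h_6$, where $$r=a_2\,N\wedge B_++a_3\,A_+\wedge M+a_4\,B_+\wedge M+a_5\,A_+\wedge B_++c_2\,A_+\wedge A_- .$$ Moreover, $[[r,r]]=-c_2^2\,A_+\wedge A_-\wedge M$, so $r$ is standard (nonzero Schouten bracket) if and only if $c_2\neq 0$, in which case $a_5=a_2a_3/c_2$; and $r$ satisfies the classical Yang–Baxter equation (non-standard case) if and only if $c_2=0$, in which case $a_2a_3=0$.
   Context: The two-photon Lie algebra $h_6$ is the real Lie algebra with basis $\{N,A_+,A_-,B_+,B_-,M\}$ and brackets $[N,A_+]=A_+$, $[N,A_-]=-A_-$, $[A_-,A_+]=M$, $[N,B_+]=2B_+$, $[N,B_-]=-2B_-$, $[B_-,B_+]=4N+2M$, $[A_+,B_-]=-2A_-$, $[A_+,B_+]=0$, $[A_-,B_+]=2A_+$, $[A_-,B_-]=0$, and $M$ central. A Lie bialgebra structure on a Lie algebra $g$ is a linear map $\delta:g\to g\otimes g$ which is a 1-cocycle, i.e. $\delta([X,Y])=[\delta(X),1\otimes Y+Y\otimes 1]+[1\otimes X+X\otimes 1,\delta(Y)]$, and whose dual map $g^*\otimes g^*\to g^*$ is a Lie bracket. For $r=\sum r^{ij}X_i\otimes X_j\in g\wedge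 g$, the Schouten bracket is $[[r,r]]=[r_{12},r_{13}]+[r_{12},r_{23}]+[r_{13},r_{23}]$ with $r_{12}=\sum r^{ij}X_i\otimes X_j\otimes 1$, $r_{13}=\sum r^{ij}X_i\otimes 1\otimes X_j$, $r_{23}=\sum r^{ij}1\otimes X_i\otimes X_j$. Here $X\wedge Y=X\otimes Y-Y\otimes X$. *)

theory Defs
  imports Complex_Main
begin

text \<open>Basis of the two-photon Lie algebra h6: N, A+, A-, B+, B-, M.
  Elements of h6 are coordinate functions gb => real (w.r.t. this basis),
  elements of h6 (x) h6 are gb => gb => real, and of h6 (x) h6 (x) h6 are gb => gb => gb => real.\<close>

datatype gb = N | Ap | Am | Bp | Bm | M

lemma UNIV_gb: "(UNIV :: gb set) = {N, Ap, Am, Bp, Bm, M}"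
  by (auto intro: gb.exhaust)

instance gb :: finite
  by standard (simp add: UNIV_gb)

type_synonym vec = "gb \<Rightarrow> real"
type_synonym tens2 = "gb \<Rightarrow> gb \<Rightarrow> real"
type_synonym tens3 = "gb \<Rightarrow> gb \<Rightarrow> gb \<Rightarrow> real"

definition brk :: "gb \<Rightarrow> gb \<Rightarrow> gb \<Rightarrow> real" where
  "brk a b k =
     (if a = N \<and> b = Ap then (if k = Ap then 1 else 0)
      else if a = N \<and> b = Am then (if k = Am then -1 else 0)
      else if a = Am \<and> b = Ap then (if k = M then 1 else 0)
      else if a = N \<and> b = Bp then (if k = Bp then 2 else 0)
      else if a = N \<and> b = Bm then (if k = Bm then -2 else 0)
      else if a = Bm \<and> b = Bp then (if k = N then 4 else if k = M then 2 else 0)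
      else if a = Ap \<and> b = Bm then (if k = Am then -2 else 0)
      else if a = Am \<and> b = Bp then (if k = Ap then 2 else 0)
      else 0)"

text \<open>Structure constants: sc a b k = coefficient of basis element k in [a,b]
  (antisymmetric extension of brk; all brackets not listed are zero, M is central).\<close>
definition sc :: "gb \<Rightarrow> gb \<Rightarrow> gb \<Rightarrow> real" where
  "sc a b k = brk a b k - brk b a k"

definition e :: "gb \<Rightarrow> vec" where
  "e a = (\<lambda>k. if k = a then 1 else 0)"

definition lie :: "vec \<Rightarrow> vec \<Rightarrow> vec" where
  "lie X Y = (\<lambda>k. \<Sum>a\<in>UNIV. \<Sum>b\<in>UNIV. X a * Y b * sc a b k)"

text \<open>[1 (x) X + X (x) 1, t] = ad_X t on g (x) g.\<close>
definition ad2 :: "vec \<Rightarrow> tens2 \<Rightarrow> tens2" where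
  "ad2 X t = (\<lambda>i j. \<Sum>a\<in>UNIV. lie X (e a) i * t a j + lie X (e a) j * t i a)"

definition wedge :: "vec \<Rightarrow> vec \<Rightarrow> tens2" where
  "wedge u v = (\<lambda>i j. u i * v j - v i * u j)"

definition wedge3 :: "vec \<Rightarrow> vec \<Rightarrow> vec \<Rightarrow> tens3" where
  "wedge3 x y z = (\<lambda>i j k.
      x i * y j * z k + y i * z j * x k + z i * x j * y k
    - y i * x j * z k - x i * z j * y k - z i * y j * x k)"

text \<open>Schouten bracket [[r,r]] = [r12,r13] + [r12,r23] + [r13,r23].\<close>
definition schouten :: "tens2 \<Rightarrow> tens3" where
  "schouten r = (\<lambda>p q u. \<Sum>i\<in>UNIV. \<Sum>j\<in>UNIV. \<Sum>k\<in>UNIV. \<Sum>l\<in>UNIV.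
       r i j * r k l *
         (sc i k p * e j q * e l u + e i p * sc j k q * e l u + e i p * e k q * sc j l u))"

definition linear_map :: "(vec \<Rightarrow> tens2) \<Rightarrow> bool" where
  "linear_map \<delta> \<longleftrightarrow> (\<forall>a b X Y. \<delta> (\<lambda>k. a * X k + b * Y k) = (\<lambda>i j. a * \<delta> X i j + b * \<delta> Y i j))"

definition cocycle :: "(vec \<Rightarrow> tens2) \<Rightarrow> bool" where
  "cocycle \<delta> \<longleftrightarrow> (\<forall>X Y. \<delta> (lie X Y) = (\<lambda>i j. ad2 X (\<delta> Y) i j - ad2 Y (\<delta> X) i j))"

text \<open>The dual map g* (x) g* -> g*, [e^i, e^j] = \<Sum>_k \<delta>(e_k)^{ij} e^k, is a Lie bracket:
  antisymmetric and satisfying the Jacobi identity (bilinearity is automatic).\<close>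
definition dual_is_lie :: "(vec \<Rightarrow> tens2) \<Rightarrow> bool" where
  "dual_is_lie \<delta> \<longleftrightarrow>
     (\<forall>k i j. \<delta> (e k) i j = - \<delta> (e k) j i) \<and>
     (\<forall>i j m l. (\<Sum>k\<in>UNIV. \<delta> (e k) i j * \<delta> (e l) k m
                          + \<delta> (e k) j m * \<delta> (e l) k i
                          + \<delta> (e k) m i * \<delta> (e l) k j) = 0)"

definition lie_bialgebra :: "(vec \<Rightarrow> tens2) \<Rightarrow> bool" where
  "lie_bialgebra \<delta> \<longleftrightarrow> linear_map \<delta> \<and> cocycle \<delta> \<and> dual_is_lie \<delta>"

definition rmat :: "real \<Rightarrow> real \<Rightarrow> real \<Rightarrow> real \<Rightarrow> real \<Rightarrow> tens2" where
  "rmat a2 a3 a4 a5 c2 = (\<lambda>i j.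
      a2 * wedge (e N) (e Bp) i j + a3 * wedge (e Ap) (e M) i j + a4 * wedge (e Bp) (e M) i j
    + a5 * wedge (e Ap) (e Bp) i j + c2 * wedge (e Ap) (e Am) i j)"

end

(*
  N is a grading element of h6: ad N is diagonal, with weights 0, 1, -1, 2, -2, 0 on
  N, A+, A-, B+, B-, M.  The cocycle identity for the pair (N, X) (Cartan's formula) shows
  that a 1-cocycle delta agrees with the coboundary of r = (ad N)^-1 delta(N) on every
  entry (i, j) of delta(X) with weight i + weight j different from weight X.  What remains
  of delta - ad r is a cocycle of weight zero, and a linear computation in sixteen
  unknowns shows that it is the coboundary of a weight-zero bivector.  So every cocycle
  with values in h6 wedge h6 is a coboundary X |-> [1 (x) X + X (x) 1, r].  The condition
  delta(B+) = 0 says that r is B+-invariant, which leaves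
  r = rmat a2 a3 a4 a5 c2 + x (N wedge A+ + A- wedge B+); the co-Jacobi identity then
  forces x^2 = 0 and a2 a3 = a5 c2.
*)
theory Submission
  imports Defs
begin

lemma sum_UNIV_gb: "(\<Sum>x\<in>UNIV. f x) = f N + f Ap + f Am + f Bp + f Bm + (f M :: real)"
  by (simp add: UNIV_gb)

lemma sc_table:
  "sc a b k = (case (a, b, k) of
       (N, Ap, Ap) \<Rightarrow> 1 | (N, Am, Am) \<Rightarrow> - 1 | (N, Bp, Bp) \<Rightarrow> 2 | (N, Bm, Bm) \<Rightarrow> - 2
     | (Ap, N, Ap) \<Rightarrow> - 1 | (Am, N, Am) \<Rightarrow> 1 | (Bp, N, Bp) \<Rightarrow> - 2 | (Bm, N, Bm) \<Rightarrow> 2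
     | (Am, Ap, M) \<Rightarrow> 1 | (Ap, Am, M) \<Rightarrow> - 1
     | (Bm, Bp, N) \<Rightarrow> 4 | (Bm, Bp, M) \<Rightarrow> 2 | (Bp, Bm, N) \<Rightarrow> - 4 | (Bp, Bm, M) \<Rightarrow> - 2
     | (Ap, Bm, Am) \<Rightarrow> - 2 | (Bm, Ap, Am) \<Rightarrow> 2
     | (Am, Bp, Ap) \<Rightarrow> 2 | (Bp, Am, Ap) \<Rightarrow> - 2
     | _ \<Rightarrow> 0)"
  by (cases a; cases b; cases k) (simp_all add: sc_def brk_def)

lemma vec_basis_expand: "X = (\<lambda>k. \<Sum>a\<in>UNIV. X a * e a k)"
proof
  show "X k = (\<Sum>a\<in>UNIV. X a * e a k)" for k
    by (cases k) (simp_all add: e_def sum_UNIV_gb)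
qed

lemma linear_map_zero:
  assumes "linear_map \<delta>"
  shows "\<delta> (\<lambda>k. 0) = (\<lambda>i j. 0)"
  using assms[unfolded linear_map_def, rule_format, of 0 "\<lambda>k. 0" 0 "\<lambda>k. 0"] by simp

lemma linear_map_sum:
  assumes "linear_map \<delta>" and "finite A"
  shows "\<delta> (\<lambda>k. \<Sum>a\<in>A. c a * e a k) = (\<lambda>i j. \<Sum>a\<in>A. c a * \<delta> (e a) i j)"
  using \<open>finite A\<close>
proof (induction A rule: finite_induct)
  case empty
  then show ?case using linear_map_zero[OF assms(1)] by simp
next
  case (insert x A)
  have "\<delta> (\<lambda>k. c x * e x k + 1 * (\<Sum>a\<in>A. c a * e a k))
      = (\<lambda>i j. c x * \<delta> (e x) i j + 1 * \<delta> (\<lambda>k. \<Sum>a\<in>A. c a * e a k) i j)"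
    by (rule assms(1)[unfolded linear_map_def, rule_format])
  with insert show ?case by simp
qed

lemma linear_map_expand: "linear_map \<delta> \<Longrightarrow> \<delta> X = (\<lambda>i j. \<Sum>a\<in>UNIV. X a * \<delta> (e a) i j)"
  by (subst vec_basis_expand) (simp add: linear_map_sum)

lemma lie_basis_left: "lie (e a) Y k = (\<Sum>b\<in>UNIV. Y b * sc a b k)"
  by (cases a) (simp_all add: lie_def e_def sum_UNIV_gb)

lemma lie_basis: "lie (e a) (e b) k = sc a b k"
  unfolding lie_basis_left by (cases b) (simp_all add: e_def sum_UNIV_gb)

lemma ad2_basis: "ad2 (e a) t i j = (\<Sum>c\<in>UNIV. sc a c i * t c j + sc a c j * t i c)"
  by (simp add: ad2_def lie_basis)

lemma lie_expand: "lie X Y k = (\<Sum>a\<in>UNIV. X a * lie (e a) Y k)"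
  by (simp only: lie_basis_left) (simp add: lie_def sum_distrib_left mult.assoc)

lemma ad2_expand: "ad2 X t i j = (\<Sum>a\<in>UNIV. X a * ad2 (e a) t i j)"
proof -
  have "ad2 X t i j = (\<Sum>c\<in>UNIV. (\<Sum>a\<in>UNIV. X a * lie (e a) (e c) i) * t c j
                                  + (\<Sum>a\<in>UNIV. X a * lie (e a) (e c) j) * t i c)"
    unfolding ad2_def by (simp only: lie_expand[of X "e _"])
  also have "\<dots> = (\<Sum>a\<in>UNIV. X a * ad2 (e a) t i j)"
    unfolding ad2_def
    by (simp add: sum_distrib_left sum_distrib_right distrib_left sum.distrib mult.assoc)
       (rule arg_cong2[where f="(+)"]; rule sum.swap)
  finally show ?thesis .
qed

lemma linear_map_eq_ad2:
  assumes "linear_map \<delta>" and "\<And>b. \<delta> (e b) = ad2 (e b) r"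
  shows "\<delta> X = ad2 X r"
  by (intro ext) (simp add: linear_map_expand[OF assms(1), of X] ad2_expand[of X] assms(2))

definition basis_cocycle :: "(gb \<Rightarrow> tens2) \<Rightarrow> bool" where
  "basis_cocycle D \<longleftrightarrow> (\<forall>a b i j.
     (\<Sum>c\<in>UNIV. sc a b c * D c i j) = ad2 (e a) (D b) i j - ad2 (e b) (D a) i j)"

lemma cocycle_imp_basis_cocycle:
  assumes "linear_map \<delta>" and "cocycle \<delta>"
  shows "basis_cocycle (\<lambda>b. \<delta> (e b))"
  unfolding basis_cocycle_def
proof (intro allI)
  fix a b i j
  have "\<delta> (lie (e a) (e b)) i j = ad2 (e a) (\<delta> (e b)) i j - ad2 (e b) (\<delta> (e a)) i j"
    using assms(2) unfolding cocycle_def by simp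
  moreover have "\<delta> (lie (e a) (e b)) i j = (\<Sum>c\<in>UNIV. sc a b c * \<delta> (e c) i j)"
    by (simp add: linear_map_expand[OF assms(1), of "lie (e a) (e b)"] lie_basis)
  ultimately show "(\<Sum>c\<in>UNIV. sc a b c * \<delta> (e c) i j)
      = ad2 (e a) (\<delta> (e b)) i j - ad2 (e b) (\<delta> (e a)) i j"
    by simp
qed

lemma sc_jacobi:
  "(\<Sum>c\<in>UNIV. sc a b c * sc c d k) = (\<Sum>c\<in>UNIV. sc a c k * sc b d c - sc b c k * sc a d c)"
  by (cases a; cases b; cases d; cases k) (simp_all add: sum_UNIV_gb sc_table)

lemma ad2_commutator:
  "ad2 (e a) (ad2 (e b) t) i j - ad2 (e b) (ad2 (e a) t) i j
     = (\<Sum>c\<in>UNIV. sc a b c * ad2 (e c) t i j)"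
proof -
  define L :: "gb \<Rightarrow> tens2 \<Rightarrow> tens2"
    where "L x s = (\<lambda>i j. \<Sum>c\<in>UNIV. sc x c i * s c j)" for x s
  define R :: "gb \<Rightarrow> tens2 \<Rightarrow> tens2"
    where "R x s = (\<lambda>i j. \<Sum>c\<in>UNIV. sc x c j * s i c)" for x s
  have ad2_LR: "ad2 (e x) s = (\<lambda>i j. L x s i j + R x s i j)" for x s
    by (intro ext) (simp add: ad2_basis L_def R_def sum.distrib)
  have L_add: "L x (\<lambda>i j. s i j + s' i j) i j = L x s i j + L x s' i j" for x s s' i j
    by (simp add: L_def distrib_left sum.distrib)
  have R_add: "R x (\<lambda>i j. s i j + s' i j) i j = R x s i j + R x s' i j" for x s s' i j
    by (simp add: R_def distrib_left sum.distrib)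
  have LL: "L x (L y t) i j = (\<Sum>d\<in>UNIV. (\<Sum>c\<in>UNIV. sc x c i * sc y d c) * t d j)" for x y i j
    unfolding L_def by (simp add: sum_distrib_left sum_distrib_right mult.assoc) (rule sum.swap)
  have RR: "R x (R y t) i j = (\<Sum>d\<in>UNIV. (\<Sum>c\<in>UNIV. sc x c j * sc y d c) * t i d)" for x y i j
    unfolding R_def by (simp add: sum_distrib_left sum_distrib_right mult.assoc) (rule sum.swap)
  have LR: "L x (R y t) i j = R y (L x t) i j" for x y i j
    unfolding L_def R_def by (simp add: sum_distrib_left mult.left_commute) (rule sum.swap)
  have jacobi_L: "L a (L b t) i j - L b (L a t) i j = (\<Sum>c\<in>UNIV. sc a b c * L c t i j)"
  proof -
    have "L a (L b t) i j - L b (L a t) i j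
        = (\<Sum>d\<in>UNIV. (\<Sum>c\<in>UNIV. sc a c i * sc b d c - sc b c i * sc a d c) * t d j)"
      by (simp add: LL sum_subtractf left_diff_distrib)
    also have "\<dots> = (\<Sum>d\<in>UNIV. (\<Sum>c\<in>UNIV. sc a b c * sc c d i) * t d j)"
      by (simp only: sc_jacobi)
    also have "\<dots> = (\<Sum>c\<in>UNIV. sc a b c * L c t i j)"
      unfolding L_def by (simp add: sum_distrib_left sum_distrib_right mult.assoc) (rule sum.swap)
    finally show ?thesis .
  qed
  have jacobi_R: "R a (R b t) i j - R b (R a t) i j = (\<Sum>c\<in>UNIV. sc a b c * R c t i j)"
  proof -
    have "R a (R b t) i j - R b (R a t) i j
        = (\<Sum>d\<in>UNIV. (\<Sum>c\<in>UNIV. sc a c j * sc b d c - sc b c j * sc a d c) * t i d)"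
      by (simp add: RR sum_subtractf left_diff_distrib)
    also have "\<dots> = (\<Sum>d\<in>UNIV. (\<Sum>c\<in>UNIV. sc a b c * sc c d j) * t i d)"
      by (simp only: sc_jacobi)
    also have "\<dots> = (\<Sum>c\<in>UNIV. sc a b c * R c t i j)"
      unfolding R_def by (simp add: sum_distrib_left sum_distrib_right mult.assoc) (rule sum.swap)
    finally show ?thesis .
  qed
  have ad2_ad2: "ad2 (e x) (ad2 (e y) t) i j
      = L x (L y t) i j + R y (L x t) i j + R x (L y t) i j + R x (R y t) i j" for x y
    by (simp add: ad2_LR L_add R_add LR)
  show ?thesis
    unfolding ad2_ad2 using jacobi_L jacobi_R by (simp add: ad2_LR distrib_left sum.distrib)
qed

lemma basis_cocycle_coboundary: "basis_cocycle (\<lambda>b. ad2 (e b) r)"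
  unfolding basis_cocycle_def by (simp add: ad2_commutator)

lemma ad2_diff: "ad2 X (\<lambda>i j. s i j - t i j) i j = ad2 X s i j - ad2 X t i j"
  by (simp add: ad2_def right_diff_distrib sum_subtractf[symmetric] algebra_simps)

lemma basis_cocycle_diff:
  assumes "basis_cocycle D" and "basis_cocycle D'"
  shows "basis_cocycle (\<lambda>b i j. D b i j - D' b i j)"
  using assms unfolding basis_cocycle_def
  by (simp add: ad2_diff right_diff_distrib sum_subtractf)

lemma ad2_antisym:
  assumes "\<And>i j. r j i = - r i j"
  shows "ad2 (e b) r j i = - ad2 (e b) r i j"
proof -
  have "sc b c j * r c i + sc b c i * r j c = - (sc b c i * r c j + sc b c j * r i c)" for c
    using assms[of c i] assms[of j c] by simp
  then show ?thesis
    by (simp only: ad2_basis sum_negf)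
qed

fun weight :: "gb \<Rightarrow> real" where
  "weight N = 0" | "weight Ap = 1" | "weight Am = -1"
| "weight Bp = 2" | "weight Bm = -2" | "weight M = 0"

lemma sc_N: "sc N a k = (if a = k then weight k else 0)"
  by (cases a; cases k) (simp_all add: sc_table)

lemma sc_nonzero_weight: "sc a b k \<noteq> 0 \<Longrightarrow> weight k = weight a + weight b"
  by (cases a; cases b; cases k) (simp_all add: sc_table)

lemma ad2_N: "ad2 (e N) t i j = (weight i + weight j) * t i j"
  by (simp add: ad2_basis sc_N distrib_right sum.distrib if_distrib[of "\<lambda>x. x * _"]
      cong: if_cong)

definition homogeneous :: "real \<Rightarrow> tens2 \<Rightarrow> bool" where
  "homogeneous w t \<longleftrightarrow> (\<forall>i j. weight i + weight j \<noteq> w \<longrightarrow> t i j = 0)"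

lemma homogeneous_ad2:
  assumes "homogeneous w t"
  shows "homogeneous (weight b + w) (ad2 (e b) t)"
  unfolding homogeneous_def
proof (intro allI impI)
  fix i j assume ij: "weight i + weight j \<noteq> weight b + w"
  have "sc b c i * t c j + sc b c j * t i c = 0" for c
    using sc_nonzero_weight[of b c i] sc_nonzero_weight[of b c j] ij assms
    unfolding homogeneous_def by force
  then show "ad2 (e b) t i j = 0"
    by (simp only: ad2_basis sum.neutral_const)
qed

lemma basis_cocycle_weight:
  assumes "basis_cocycle D"
  shows "(weight i + weight j - weight b) * D b i j = ad2 (e b) (D N) i j"
proof -
  have "(\<Sum>c\<in>UNIV. sc N b c * D c i j) = ad2 (e N) (D b) i j - ad2 (e b) (D N) i j"
    using assms unfolding basis_cocycle_def by blast
  then show ?thesis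
    by (simp add: sc_N ad2_N if_distrib[of "\<lambda>x. x * _"] left_diff_distrib cong: if_cong)
qed

lemma basis_cocycle_homogeneous:
  assumes "basis_cocycle D" and "homogeneous 0 (D N)"
  shows "homogeneous (weight b) (D b)"
  unfolding homogeneous_def
proof (intro allI impI)
  fix i j assume "weight i + weight j \<noteq> weight b"
  moreover have "ad2 (e b) (D N) i j = 0"
    using homogeneous_ad2[OF assms(2), of b] \<open>weight i + weight j \<noteq> weight b\<close>
    unfolding homogeneous_def by simp
  ultimately show "D b i j = 0"
    using basis_cocycle_weight[OF assms(1), of i j b] by simp
qed

lemma homogeneous_cocycle_eq_0:
  assumes C: "basis_cocycle D" and antisym: "\<And>b i j. D b j i = - D b i j"
    and H: "homogeneous 0 (D N)"
    and normalized: "D Ap Ap M = 0" "D Am Am M = 0" "D Bp N Bp = 0"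
  shows "D b i j = 0"
proof -
  have off_weight [simp]: "D b i j = 0" if "weight i + weight j \<noteq> weight b" for b i j
    using basis_cocycle_homogeneous[OF C H, of b] that unfolding homogeneous_def by blast
  have diag [simp]: "D b i i = 0" for b i
    using antisym[of b i i] by simp
  note cocycle = C[unfolded basis_cocycle_def, rule_format]
  \<comment> \<open>These instances have rank 13 on the 16 entries of matching weight (up to
    antisymmetry), so together with the three normalised entries they force all to vanish.\<close>
  note weight_zero_eqs =
    cocycle[of N Ap Ap M] cocycle[of N Ap Am Bp] cocycle[of N Am Am M] cocycle[of Ap Am N M]
    cocycle[of Ap Am Ap Am] cocycle[of Ap Am Bp Bm] cocycle[of Ap Bp Ap Bp]
    cocycle[of Ap Bm N Am] cocycle[of Ap Bm Ap Bm] cocycle[of Ap Bm Am M]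
    cocycle[of Ap M Ap M] cocycle[of Am Bp Ap M] cocycle[of Am Bp Am Bp]
  note eqs = weight_zero_eqs[unfolded sum_UNIV_gb ad2_basis sc_table, simplified]
  note swaps =
    antisym[of N N M] antisym[of N Ap Am] antisym[of N Bp Bm] antisym[of Ap N Ap]
    antisym[of Ap Ap M] antisym[of Ap Am Bp] antisym[of Am N Am] antisym[of Am Ap Bm]
    antisym[of Am Am M] antisym[of Bp N Bp] antisym[of Bp Bp M] antisym[of Bm N Bm]
    antisym[of Bm Bm M] antisym[of M N M] antisym[of M Ap Am] antisym[of M Bp Bm]
  show ?thesis
  proof (cases "weight i + weight j = weight b")
    case True
    then show ?thesis
      by (cases b; cases i; cases j; simp; insert eqs normalized swaps; linarith)
  qed (rule off_weight)
qed

text \<open>On entries of nonzero weight the first summand inverts ad N on D N; on weight-zero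
  entries it is a division by zero, hence 0, and the three wedge terms instead make the
  entries normalised in homogeneous_cocycle_eq_0 vanish.\<close>
definition coboundary_potential :: "(gb \<Rightarrow> tens2) \<Rightarrow> tens2" where
  "coboundary_potential D = (\<lambda>i j. D N i j / (weight i + weight j)
     + (D Am Am M - D Ap Ap M) / 2 * wedge (e N) (e M) i j
     - (D Ap Ap M + D Am Am M) / 2 * wedge (e Ap) (e Am) i j
     + D Bp N Bp / 4 * wedge (e Bp) (e Bm) i j)"

lemma coboundary_potential_antisym:
  assumes "\<And>i j. D N j i = - D N i j"
  shows "coboundary_potential D j i = - coboundary_potential D i j"
  using assms[of i j] unfolding coboundary_potential_def wedge_def
  by (simp add: add.commute) (simp add: field_simps)

lemma basis_cocycle_eq_coboundary:
  assumes C: "basis_cocycle D" and antisym: "\<And>b i j. D b j i = - D b i j"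
  shows "D b i j = ad2 (e b) (coboundary_potential D) i j"
proof -
  define r where "r = coboundary_potential D"
  define D' where "D' b i j = D b i j - ad2 (e b) r i j" for b i j
  have r_antisym: "r j i = - r i j" for i j
    unfolding r_def by (rule coboundary_potential_antisym) (rule antisym)
  have "basis_cocycle D'"
    unfolding D'_def using basis_cocycle_diff[OF C basis_cocycle_coboundary] .
  moreover have "D' b j i = - D' b i j" for b i j
    unfolding D'_def
    using antisym[of b i j] ad2_antisym[where r = r and b = b and i = i and j = j, OF r_antisym]
    by simp
  moreover have "homogeneous 0 (D' N)"
    unfolding homogeneous_def
  proof (intro allI impI)
    fix i j assume "weight i + weight j \<noteq> 0"
    then show "D' N i j = 0"
      unfolding D'_def ad2_N r_def coboundary_potential_def
      by (cases i; cases j) (simp_all add: wedge_def e_def)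
  qed
  moreover have "D' Ap Ap M = 0" "D' Am Am M = 0" "D' Bp N Bp = 0"
    unfolding D'_def r_def ad2_basis
    by (simp_all add: coboundary_potential_def sum_UNIV_gb sc_table wedge_def e_def field_simps)
  ultimately have "D' b i j = 0"
    by (rule homogeneous_cocycle_eq_0)
  then show ?thesis
    unfolding D'_def r_def by simp
qed

lemma antisymmetric_cocycle_is_coboundary:
  assumes "linear_map \<delta>" and "cocycle \<delta>"
    and antisym: "\<And>b i j. \<delta> (e b) j i = - \<delta> (e b) i j"
  obtains r where "\<And>i j. r j i = - r i j" and "\<And>b. \<delta> (e b) = ad2 (e b) r"
proof
  let ?r = "coboundary_potential (\<lambda>b. \<delta> (e b))"
  show "?r j i = - ?r i j" for i j
    by (rule coboundary_potential_antisym) (rule antisym)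
  show "\<delta> (e b) = ad2 (e b) ?r" for b
    using basis_cocycle_eq_coboundary[OF cocycle_imp_basis_cocycle[OF assms(1,2)] antisym]
    by (intro ext)
qed

lemma rmat_table:
  "rmat a2 a3 a4 a5 c2 i j = (case (i, j) of
       (N, Bp) \<Rightarrow> a2 | (Bp, N) \<Rightarrow> - a2 | (Ap, M) \<Rightarrow> a3 | (M, Ap) \<Rightarrow> - a3
     | (Bp, M) \<Rightarrow> a4 | (M, Bp) \<Rightarrow> - a4 | (Ap, Bp) \<Rightarrow> a5 | (Bp, Ap) \<Rightarrow> - a5
     | (Ap, Am) \<Rightarrow> c2 | (Am, Ap) \<Rightarrow> - c2 | _ \<Rightarrow> 0)"
  by (cases i; cases j) (simp_all add: rmat_def wedge_def e_def)

lemma ad2_Bp_rmat: "ad2 (e Bp) (rmat a2 a3 a4 a5 c2) = (\<lambda>i j. 0)"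
proof (intro ext)
  show "ad2 (e Bp) (rmat a2 a3 a4 a5 c2) i j = 0" for i j
    unfolding ad2_basis by (cases i; cases j) (simp_all add: sum_UNIV_gb sc_table rmat_table)
qed

definition rmat_ext :: "real \<Rightarrow> real \<Rightarrow> real \<Rightarrow> real \<Rightarrow> real \<Rightarrow> real \<Rightarrow> tens2" where
  "rmat_ext a2 a3 a4 a5 c2 x = (\<lambda>i j. rmat a2 a3 a4 a5 c2 i j
                                   + x * (wedge (e N) (e Ap) i j + wedge (e Am) (e Bp) i j))"

lemma Bp_invariant_bivector:
  assumes antisym: "\<And>i j. r j i = - r i j" and invariant: "\<And>i j. ad2 (e Bp) r i j = 0"
  shows "\<exists>a2 a3 a4 a5 c2 x. r = rmat_ext a2 a3 a4 a5 c2 x"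
proof -
  note invariance_eqs =
    invariant[of N Ap] invariant[of N Am] invariant[of N Bp] invariant[of N M]
    invariant[of Ap Bp] invariant[of Ap Bm] invariant[of Ap M] invariant[of Am Bp]
    invariant[of Am M] invariant[of Bp Bm] invariant[of Bp M]
  have diag: "r i i = 0" for i
    using antisym[of i i] by simp
  note eqs = invariance_eqs[unfolded ad2_basis sum_UNIV_gb sc_table diag, simplified]
  note swaps =
    antisym[of N Ap] antisym[of N Am] antisym[of N Bp] antisym[of N Bm] antisym[of N M]
    antisym[of Ap Am] antisym[of Ap Bp] antisym[of Ap Bm] antisym[of Ap M] antisym[of Am Bp]
    antisym[of Am Bm] antisym[of Am M] antisym[of Bp Bm] antisym[of Bp M] antisym[of Bm M]
  have "r i j = rmat (r N Bp) (r Ap M) (r Bp M) (r Ap Bp) (r Ap Am) i j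
                + r N Ap * (wedge (e N) (e Ap) i j + wedge (e Am) (e Bp) i j)" for i j
    by (cases i; cases j; simp add: rmat_table wedge_def e_def diag; insert eqs swaps; linarith)
  then show ?thesis
    unfolding rmat_ext_def by blast
qed

lemma coJacobi_constraints:
  assumes J: "dual_is_lie \<delta>"
    and D: "\<And>b. \<delta> (e b) = ad2 (e b) (rmat_ext a2 a3 a4 a5 c2 x)"
  shows "x = 0" and "a2 * a3 - a5 * c2 = 0"
proof -
  note jacobi = J[unfolded dual_is_lie_def, THEN conjunct2, rule_format]
  have "2 * x * x = 0"
    using jacobi[where i = N and j = M and m = Ap and l = Am] unfolding D ad2_basis
    by (simp add: rmat_ext_def sum_UNIV_gb sc_table rmat_table wedge_def e_def algebra_simps)
  then show "x = 0" by simp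
  show "a2 * a3 - a5 * c2 = 0"
    using jacobi[where i = Ap and j = Bp and m = M and l = N] unfolding D ad2_basis
    by (simp add: rmat_ext_def sum_UNIV_gb sc_table rmat_table wedge_def e_def algebra_simps)
qed

lemma lie_bialgebra_Bp_eq_0_iff:
  assumes "lie_bialgebra \<delta>"
  shows "\<delta> (e Bp) = (\<lambda>i j. 0) \<longleftrightarrow>
           (\<exists>a2 a3 a4 a5 c2. a2 * a3 - a5 * c2 = 0 \<and> (\<forall>X. \<delta> X = ad2 X (rmat a2 a3 a4 a5 c2)))"
    (is "_ \<longleftrightarrow> ?coboundary")
proof
  assume "?coboundary"
  then obtain a2 a3 a4 a5 c2 where "\<delta> (e Bp) = ad2 (e Bp) (rmat a2 a3 a4 a5 c2)"
    by blast
  then show "\<delta> (e Bp) = (\<lambda>i j. 0)"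
    by (simp add: ad2_Bp_rmat)
next
  assume Bp: "\<delta> (e Bp) = (\<lambda>i j. 0)"
  have L: "linear_map \<delta>" and C: "cocycle \<delta>" and J: "dual_is_lie \<delta>"
    using assms unfolding lie_bialgebra_def by auto
  have "\<delta> (e b) j i = - \<delta> (e b) i j" for b i j
    using J unfolding dual_is_lie_def by blast
  then obtain r where r_antisym: "\<And>i j. r j i = - r i j"
    and coboundary: "\<And>b. \<delta> (e b) = ad2 (e b) r"
    using antisymmetric_cocycle_is_coboundary[OF L C] by blast
  have "ad2 (e Bp) r i j = 0" for i j
    by (simp add: coboundary[of Bp, symmetric] Bp)
  then obtain a2 a3 a4 a5 c2 x where "r = rmat_ext a2 a3 a4 a5 c2 x"
    using Bp_invariant_bivector[where r = r] r_antisym by blast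
  with coboundary have family: "\<delta> (e b) = ad2 (e b) (rmat_ext a2 a3 a4 a5 c2 x)" for b
    by simp
  note constraints = coJacobi_constraints[OF J family]
  have "\<delta> X = ad2 X (rmat a2 a3 a4 a5 c2)" for X
  proof (rule linear_map_eq_ad2[OF L])
    show "\<delta> (e b) = ad2 (e b) (rmat a2 a3 a4 a5 c2)" for b
      using family constraints(1) by (simp add: rmat_ext_def)
  qed
  with constraints(2) show ?coboundary
    by blast
qed

lemma schouten_expand:
  "schouten r p q u =
     (\<Sum>i\<in>UNIV. \<Sum>k\<in>UNIV. r i q * r k u * sc i k p)
   + (\<Sum>j\<in>UNIV. \<Sum>k\<in>UNIV. r p j * r k u * sc j k q)
   + (\<Sum>j\<in>UNIV. \<Sum>l\<in>UNIV. r p j * r q l * sc j l u)"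
proof -
  have sum_if_const:
    "(\<Sum>k\<in>UNIV. if P then f k else 0) = (if P then \<Sum>k\<in>UNIV. f k else (0::real))"
    for P and f :: "gb \<Rightarrow> real"
    by simp
  show ?thesis
    unfolding schouten_def e_def
    by (simp add: distrib_left sum.distrib mult.assoc if_distrib[of "\<lambda>x. x * _"]
        if_distrib[of "\<lambda>x. _ * x"] sum_if_const cong: if_cong)
qed

lemma schouten_rmat:
  assumes "a2 * a3 - a5 * c2 = 0"
  shows "schouten (rmat a2 a3 a4 a5 c2) = (\<lambda>p q u. - (c2 ^ 2) * wedge3 (e Ap) (e Am) (e M) p q u)"
proof (intro ext)
  show "schouten (rmat a2 a3 a4 a5 c2) p q u = - (c2 ^ 2) * wedge3 (e Ap) (e Am) (e M) p q u"
    for p q u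
    using assms
    by (cases p; cases q; cases u)
       (simp_all add: schouten_expand sum_UNIV_gb sc_table rmat_table wedge_def wedge3_def e_def
          power2_eq_square algebra_simps)
qed

lemma schouten_rmat_eq_0_iff:
  assumes "a2 * a3 - a5 * c2 = 0"
  shows "schouten (rmat a2 a3 a4 a5 c2) = (\<lambda>p q u. 0) \<longleftrightarrow> c2 = 0"
proof
  assume "schouten (rmat a2 a3 a4 a5 c2) = (\<lambda>p q u. 0)"
  then have "schouten (rmat a2 a3 a4 a5 c2) Ap Am M = 0"
    by simp
  then show "c2 = 0"
    by (simp add: schouten_rmat[OF assms] wedge3_def e_def)
qed (use schouten_rmat[OF assms] in simp)

theorem mainTheorem3:
  shows "(\<forall>\<delta>. lie_bialgebra \<delta> \<longrightarrow>
            (\<delta> (e Bp) = (\<lambda>i j. 0) \<longleftrightarrow>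
              (\<exists>a2 a3 a4 a5 c2. a2 * a3 - a5 * c2 = 0 \<and>
                 (\<forall>X. \<delta> X = ad2 X (rmat a2 a3 a4 a5 c2)))))
       \<and> (\<forall>a2 a3 a4 a5 c2. a2 * a3 - a5 * c2 = 0 \<longrightarrow>
            schouten (rmat a2 a3 a4 a5 c2) = (\<lambda>i j k. - (c2 ^ 2) * wedge3 (e Ap) (e Am) (e M) i j k)
          \<and> (schouten (rmat a2 a3 a4 a5 c2) \<noteq> (\<lambda>i j k. 0) \<longleftrightarrow> c2 \<noteq> 0)
          \<and> (c2 \<noteq> 0 \<longrightarrow> a5 = a2 * a3 / c2)
          \<and> (schouten (rmat a2 a3 a4 a5 c2) = (\<lambda>i j k. 0) \<longleftrightarrow> c2 = 0)
          \<and> (c2 = 0 \<longrightarrow> a2 * a3 = 0))"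
proof (intro conjI allI impI)
  fix \<delta> :: "vec \<Rightarrow> tens2"
  assume "lie_bialgebra \<delta>"
  then show "\<delta> (e Bp) = (\<lambda>i j. 0) \<longleftrightarrow>
      (\<exists>a2 a3 a4 a5 c2. a2 * a3 - a5 * c2 = 0 \<and> (\<forall>X. \<delta> X = ad2 X (rmat a2 a3 a4 a5 c2)))"
    by (rule lie_bialgebra_Bp_eq_0_iff)
next
  fix a2 a3 a4 a5 c2 :: real
  assume rel: "a2 * a3 - a5 * c2 = 0"
  show "schouten (rmat a2 a3 a4 a5 c2) = (\<lambda>i j k. - (c2 ^ 2) * wedge3 (e Ap) (e Am) (e M) i j k)"
    using rel by (rule schouten_rmat)
  show classical: "schouten (rmat a2 a3 a4 a5 c2) = (\<lambda>i j k. 0) \<longleftrightarrow> c2 = 0"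
    using rel by (rule schouten_rmat_eq_0_iff)
  then show "schouten (rmat a2 a3 a4 a5 c2) \<noteq> (\<lambda>i j k. 0) \<longleftrightarrow> c2 \<noteq> 0"
    by blast
  show "c2 \<noteq> 0 \<Longrightarrow> a5 = a2 * a3 / c2" and "c2 = 0 \<Longrightarrow> a2 * a3 = 0"
    using rel by (simp_all add: field_simps)
qed

end
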